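(* For any unit-cost instance of the Correlated Pandora's Problem (all $c_i=1$) whose volumes are positive even integers, $\mathrm{CP}_{\textsc{Unit}}\le\mathrm{OPT}$, where $\mathrm{CP}_{\textsc{Unit}}$ is the optimal value of the Unit-Cost Convex Program.
   Context: Correlated Pandora's Problem: boxes $[n]$, box $i$ has opening cost $c_i$ (here $c_i=1$) and volume $v_i$; the scenario $v=(v_1,\dots,v_n)$ is drawn from a known, possibly correlated distribution $\mathcal{D}$. Opening a box costs its cost and reveals its volume; an algorithm repeatedly opens another box or stops and takes an opened box of minimum volume; the objective is total opening cost plus taken volume, minimized in expectation. A partially adaptive algorithm fixes the opening order in advance (independent of $v$) and adaptively decides when to stop; $\mathrm{OPT}$ is the minimum expected objective of a partially adaptive algorithm. Write $x_+=\max\{x,0\}$. Unit-Cost Convex Program: variables $x_i(t)\ge 0$ for $i,t\in[n]$ with $\sum_{i\in[n]}x_i(t)\le 1$ for all $t\in[n]$; minimize $\mathbf{E}_{v\sim\mathcal{D}}\sum_{t=1}^\infty\big(1-\sum_{i\in[n]}\sum_{t'\in[n],\,t'<t-v_i}x_i(t')\big)_+$. *)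

theory Defs
  imports "HOL-Probability.Probability"
begin

text \<open>A scenario is a function
  v :: nat \<Rightarrow> nat (only the values v 1, ..., v n matter); the distribution
  is a pmf over scenarios. All opening costs are 1.\<close>

text \<open>Partially adaptive algorithm: a fixed opening order sigma (sigma k is the box
  opened in step k, a bijection of [n]) and a non-anticipating stopping time tau:
  tau v is the number of boxes opened in scenario v; it lies in [n] (at least one
  box is opened, so that a box can be taken), and whether to stop may only depend
  on the volumes revealed so far.\<close>
definition partially_adaptive :: "nat \<Rightarrow> (nat \<Rightarrow> nat) \<Rightarrow> ((nat \<Rightarrow> nat) \<Rightarrow> nat) \<Rightarrow> bool" where
  "partially_adaptive n \<sigma> \<tau> \<longleftrightarrow>
     bij_betw \<sigma> {1..n} {1..n} \<and>
     (\<forall>v. \<tau> v \<in> {1..n}) \<and>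
     (\<forall>v w. (\<forall>k\<in>{1..\<tau> v}. w (\<sigma> k) = v (\<sigma> k)) \<longrightarrow> \<tau> w = \<tau> v)"

definition pa_cost :: "(nat \<Rightarrow> nat) \<Rightarrow> ((nat \<Rightarrow> nat) \<Rightarrow> nat) \<Rightarrow> (nat \<Rightarrow> nat) \<Rightarrow> nat" where
  "pa_cost \<sigma> \<tau> v = \<tau> v + Min ((\<lambda>k. v (\<sigma> k)) ` {1..\<tau> v})"

definition OPT_pa :: "nat \<Rightarrow> (nat \<Rightarrow> nat) pmf \<Rightarrow> ennreal" where
  "OPT_pa n D = (INF (\<sigma>, \<tau>) \<in> {(\<sigma>, \<tau>). partially_adaptive n \<sigma> \<tau>}.
                   \<integral>\<^sup>+ v. of_nat (pa_cost \<sigma> \<tau> v) \<partial>(measure_pmf D))"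

definition unit_cp_feasible :: "nat \<Rightarrow> (nat \<Rightarrow> nat \<Rightarrow> real) \<Rightarrow> bool" where
  "unit_cp_feasible n x \<longleftrightarrow>
     (\<forall>i\<in>{1..n}. \<forall>t\<in>{1..n}. x i t \<ge> 0) \<and>
     (\<forall>t\<in>{1..n}. (\<Sum>i\<in>{1..n}. x i t) \<le> 1)"

text \<open>Objective; the condition t' < t - v_i is written t' + v_i < t, and the sum
  over t = 1, 2, ... is taken in the extended nonnegative reals (it may diverge).\<close>
definition unit_cp_obj :: "nat \<Rightarrow> (nat \<Rightarrow> nat) pmf \<Rightarrow> (nat \<Rightarrow> nat \<Rightarrow> real) \<Rightarrow> ennreal" where
  "unit_cp_obj n D x =
     (\<integral>\<^sup>+ v. (\<Sum>t. ennreal (max 0 (1 - (\<Sum>i\<in>{1..n}. \<Sum>t'\<in>{t'\<in>{1..n}. t' + v i < Suc t}. x i t'))))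
        \<partial>(measure_pmf D))"

definition CP_unit :: "nat \<Rightarrow> (nat \<Rightarrow> nat) pmf \<Rightarrow> ennreal" where
  "CP_unit n D = (INF x \<in> {x. unit_cp_feasible n x}. unit_cp_obj n D x)"

end

theory Submission
  imports Defs
begin

text \<open>An opening order \<sigma> induces the integral solution x i t = [\<sigma> t = i] of the convex
  program. Let the algorithm stop after \<tau> steps and take the box \<sigma> k, k \<le> \<tau>, of minimum
  volume. The term of the objective at time t vanishes once t > k + v (\<sigma> k), and every term
  is at most 1, so in each scenario the objective is at most k + v (\<sigma> k), which is at most the
  cost \<tau> + v (\<sigma> k) of the algorithm.\<close>

definition cp_scenario_obj :: "nat \<Rightarrow> (nat \<Rightarrow> nat \<Rightarrow> real) \<Rightarrow> (nat \<Rightarrow> nat) \<Rightarrow> ennreal" where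
  "cp_scenario_obj n x v =
     (\<Sum>t. ennreal (max 0 (1 - (\<Sum>i\<in>{1..n}. \<Sum>t'\<in>{t'\<in>{1..n}. t' + v i < Suc t}. x i t'))))"

lemma unit_cp_obj_eq_nn_integral:
  "unit_cp_obj n D x = (\<integral>\<^sup>+ v. cp_scenario_obj n x v \<partial>measure_pmf D)"
  by (simp add: unit_cp_obj_def cp_scenario_obj_def)

lemma cp_scenario_obj_le:
  assumes nonneg: "\<forall>i\<in>{1..n}. \<forall>t\<in>{1..n}. x i t \<ge> 0"
    and i: "i \<in> {1..n}" and k: "k \<in> {1..n}" and x_ik: "x i k \<ge> 1"
  shows "cp_scenario_obj n x v \<le> of_nat (k + v i)"
proof -
  define covered where
    "covered t = (\<Sum>i\<in>{1..n}. \<Sum>t'\<in>{t'\<in>{1..n}. t' + v i < Suc t}. x i t')" for t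
  have covered_nonneg: "0 \<le> covered t" for t
    using nonneg unfolding covered_def by (auto intro!: sum_nonneg)
  have covered_ge_1: "1 \<le> covered t" if "k + v i \<le> t" for t
  proof -
    have "x i k \<le> (\<Sum>t'\<in>{t'\<in>{1..n}. t' + v i < Suc t}. x i t')"
      by (rule member_le_sum) (use k that nonneg i in auto)
    also have "\<dots> \<le> covered t"
      unfolding covered_def
      by (rule member_le_sum[where f = "\<lambda>i. \<Sum>t'\<in>{t'\<in>{1..n}. t' + v i < Suc t}. x i t'"])
         (use i nonneg in \<open>auto intro: sum_nonneg\<close>)
    finally show ?thesis using x_ik by simp
  qed
  have "cp_scenario_obj n x v = (\<Sum>t. ennreal (max 0 (1 - covered t)))"
    by (simp add: cp_scenario_obj_def covered_def)
  also have "\<dots> = (\<Sum>t<k + v i. ennreal (max 0 (1 - covered t)))"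
  proof (rule suminf_finite)
    fix t assume "t \<notin> {..<k + v i}"
    then have "1 \<le> covered t" by (simp add: covered_ge_1)
    then show "ennreal (max 0 (1 - covered t)) = 0" by simp
  qed simp
  also have "\<dots> \<le> (\<Sum>t<k + v i. 1)"
    by (rule sum_mono) (simp add: covered_nonneg)
  finally show ?thesis by simp
qed

definition order_solution :: "(nat \<Rightarrow> nat) \<Rightarrow> nat \<Rightarrow> nat \<Rightarrow> real" where
  "order_solution \<sigma> i t = (if \<sigma> t = i then 1 else 0)"

lemma unit_cp_feasible_order_solution: "unit_cp_feasible n (order_solution \<sigma>)"
proof -
  have "(\<Sum>i\<in>{1..n}. order_solution \<sigma> i t) \<le> 1" for t
    by (simp add: order_solution_def sum.delta')
  then show ?thesis
    by (simp add: unit_cp_feasible_def order_solution_def)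
qed

lemma cp_scenario_obj_order_solution_le_pa_cost:
  assumes "partially_adaptive n \<sigma> \<tau>"
  shows "cp_scenario_obj n (order_solution \<sigma>) v \<le> of_nat (pa_cost \<sigma> \<tau> v)"
proof -
  have bij: "bij_betw \<sigma> {1..n} {1..n}" and \<tau>: "\<tau> v \<in> {1..n}"
    using assms by (simp_all only: partially_adaptive_def)
  let ?opened = "(\<lambda>k. v (\<sigma> k)) ` {1..\<tau> v}"
  have "Min ?opened \<in> ?opened"
    using \<tau> by (intro Min_in) auto
  then obtain k where k: "k \<in> {1..\<tau> v}" and min_k: "Min ?opened = v (\<sigma> k)"
    by auto
  have k_n: "k \<in> {1..n}" using k \<tau> by auto
  then have \<sigma>_k: "\<sigma> k \<in> {1..n}" using bij bij_betwE by blast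
  have cost: "k + v (\<sigma> k) \<le> pa_cost \<sigma> \<tau> v"
    using k min_k by (simp add: pa_cost_def)
  have "cp_scenario_obj n (order_solution \<sigma>) v \<le> of_nat (k + v (\<sigma> k))"
    by (rule cp_scenario_obj_le) (use k_n \<sigma>_k in \<open>simp_all add: order_solution_def\<close>)
  also have "\<dots> \<le> of_nat (pa_cost \<sigma> \<tau> v)"
    using cost by (rule of_nat_mono)
  finally show ?thesis .
qed

theorem lemma3p1:
  fixes n :: nat and D :: "(nat \<Rightarrow> nat) pmf"
  assumes "\<forall>v\<in>set_pmf D. \<forall>i\<in>{1..n}. v i > 0 \<and> even (v i)"
  shows "CP_unit n D \<le> OPT_pa n D"
  unfolding OPT_pa_def
proof (rule INF_greatest, clarify)
  fix \<sigma> \<tau> assume pa: "partially_adaptive n \<sigma> \<tau>"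
  have "CP_unit n D \<le> unit_cp_obj n D (order_solution \<sigma>)"
    unfolding CP_unit_def by (rule INF_lower) (simp add: unit_cp_feasible_order_solution)
  also have "\<dots> \<le> \<integral>\<^sup>+ v. of_nat (pa_cost \<sigma> \<tau> v) \<partial>measure_pmf D"
    unfolding unit_cp_obj_eq_nn_integral
    by (rule nn_integral_mono) (rule cp_scenario_obj_order_solution_le_pa_cost[OF pa])
  finally show "CP_unit n D \<le> \<integral>\<^sup>+ v. of_nat (pa_cost \<sigma> \<tau> v) \<partial>measure_pmf D" .
qed

end
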